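(* Let $x_0\in\mathbb{R}$ with $x_0\neq1$, let $\alpha>1$ and let \[ 0<T^*<\frac{\alpha-1}{\alpha(1+\alpha|x_0|)}. \] Then there exists a solution $x\in C^1([0,T^*])$ of the problem \[ \dot x(t)=x(t)-\max_{s\in[0,t]}x^2(s),\quad t\in[0,T^*],\qquad x(0)=x_0. \] *)

theory Defs
  imports "HOL-Analysis.Analysis"
begin

end

theory Submission
  imports Defs
begin

text \<open>
  The problem has explicit solutions. For \<open>x0 \<le> 1\<close> the square of the logistic curve
  \<open>x0 / (x0 + (1 - x0) e\<^sup>-\<^sup>t)\<close> is nondecreasing, so the running maximum of \<open>x\<^sup>2\<close> is \<open>x(t)\<^sup>2\<close>
  and the equation becomes the logistic equation \<open>x' = x - x\<^sup>2\<close>. For \<open>x0 \<ge> 1\<close> the solution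
  \<open>x0\<^sup>2 - (x0\<^sup>2 - x0) e\<^sup>t\<close> of \<open>x' = x - x0\<^sup>2\<close> decreases from \<open>x0\<close> and stays above \<open>-x0\<close>
  for a while, so the running maximum stays \<open>x0\<^sup>2\<close>. Both curves behave as claimed as long
  as \<open>t < 1 / (1 + \<bar>x0\<bar>)\<close>, and the existence time of the theorem is below this bound for
  every \<open>\<alpha> > 0\<close>.
\<close>

definition max_feedback_solution ::
    "real \<Rightarrow> real \<Rightarrow> (real \<Rightarrow> real) \<Rightarrow> (real \<Rightarrow> real) \<Rightarrow> bool" where
  "max_feedback_solution T x0 x x' \<longleftrightarrow>
     (\<forall>t\<in>{0..T}. (x has_real_derivative x' t) (at t within {0..T}))
   \<and> continuous_on {0..T} x'
   \<and> (\<forall>t\<in>{0..T}. x' t = x t - (SUP s\<in>{0..t}. (x s)\<^sup>2))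
   \<and> x 0 = x0"

lemma existence_time_le_inverse_one_plus:
  fixes \<alpha> c :: real
  assumes "0 < \<alpha>" and "0 \<le> c"
  shows "(\<alpha> - 1) / (\<alpha> * (1 + \<alpha> * c)) \<le> 1 / (1 + c)"
proof -
  have "0 \<le> c * (\<alpha> - 1)\<^sup>2" and "0 \<le> c * \<alpha>"
    using assms by simp_all
  then have "(\<alpha> - 1) * (1 + c) \<le> \<alpha> * (1 + \<alpha> * c)"
    by (simp add: algebra_simps power2_eq_square)
  with assms show ?thesis
    by (simp add: divide_simps add_pos_nonneg)
qed

lemma mult_exp_less_one_plus:
  fixes a t :: real
  assumes "0 \<le> a" and "t < 1 / (1 + a)"
  shows "a * exp t < 1 + a"
proof -
  have "a < (1 + a) * (1 - t)"
    using assms by (simp add: field_simps)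
  also have "\<dots> \<le> (1 + a) * exp (- t)"
    using assms(1) exp_ge_add_one_self[of "- t"] by (intro mult_left_mono) auto
  finally show ?thesis
    by (simp add: exp_minus field_simps)
qed

definition logistic :: "real \<Rightarrow> real \<Rightarrow> real" where
  "logistic x0 t = x0 / (x0 + (1 - x0) * exp (- t))"

lemma logistic_0 [simp]: "logistic x0 0 = x0"
  by (simp add: logistic_def)

lemma logistic_denominator_pos:
  fixes x0 t :: real
  assumes "x0 \<le> 1" and "t < 1 / (1 + \<bar>x0\<bar>)"
  shows "0 < x0 + (1 - x0) * exp (- t)"
proof (cases "0 \<le> x0")
  case True
  then show ?thesis
    using assms(1) by (cases "x0 = 1") (auto intro: add_nonneg_pos)
next
  case False
  then have "- x0 * exp t < 1 - x0"
    using mult_exp_less_one_plus[of "- x0" t] assms(2) by simp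
  then have "0 < exp (- t) * (x0 * exp t + (1 - x0))"
    by simp
  then show ?thesis
    by (simp add: algebra_simps exp_minus)
qed

lemma has_real_derivative_logistic:
  fixes x0 t :: real
  assumes "x0 + (1 - x0) * exp (- t) \<noteq> 0"
  shows "(logistic x0 has_real_derivative logistic x0 t - (logistic x0 t)\<^sup>2) (at t)"
proof -
  define d where "d = x0 + (1 - x0) * exp (- t)"
  have "(logistic x0 has_real_derivative x0 * ((1 - x0) * exp (- t)) / d\<^sup>2) (at t)"
    unfolding logistic_def [abs_def] d_def using assms
    by (auto intro!: derivative_eq_intros simp: power2_eq_square)
  moreover have "x0 * ((1 - x0) * exp (- t)) = x0 * d - x0\<^sup>2"
    by (simp add: d_def algebra_simps power2_eq_square)
  moreover have "(x0 * d - x0\<^sup>2) / d\<^sup>2 = logistic x0 t - (logistic x0 t)\<^sup>2"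
    using assms by (simp add: logistic_def flip: d_def) (simp add: field_simps power2_eq_square)
  ultimately show ?thesis
    by simp
qed

lemma logistic_square_mono:
  fixes x0 s t :: real
  assumes "x0 \<le> 1" and "s \<le> t" and "t < 1 / (1 + \<bar>x0\<bar>)"
  shows "(logistic x0 s)\<^sup>2 \<le> (logistic x0 t)\<^sup>2"
proof -
  let ?d = "\<lambda>t. x0 + (1 - x0) * exp (- t)"
  have "0 < ?d t"
    using assms(1,3) by (rule logistic_denominator_pos)
  moreover have "?d t \<le> ?d s"
    using assms(1,2) by (simp add: mult_left_mono)
  ultimately have "(?d t)\<^sup>2 \<le> (?d s)\<^sup>2" and "0 < ?d s"
    by (auto intro: power_mono)
  with \<open>0 < ?d t\<close> have "x0\<^sup>2 / (?d s)\<^sup>2 \<le> x0\<^sup>2 / (?d t)\<^sup>2"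
    by (intro divide_left_mono) auto
  then show ?thesis
    by (simp add: logistic_def power_divide)
qed

lemma max_feedback_solution_logistic:
  fixes x0 T :: real
  assumes "x0 \<le> 1" and "T < 1 / (1 + \<bar>x0\<bar>)"
  shows "max_feedback_solution T x0 (logistic x0) (\<lambda>t. logistic x0 t - (logistic x0 t)\<^sup>2)"
proof -
  have deriv: "(logistic x0 has_real_derivative logistic x0 t - (logistic x0 t)\<^sup>2) (at t)"
    if "t \<le> T" for t
  proof (rule has_real_derivative_logistic)
    show "x0 + (1 - x0) * exp (- t) \<noteq> 0"
      using logistic_denominator_pos[OF assms(1), of t] that assms(2) by fastforce
  qed
  then have "continuous_on {0..T} (logistic x0)"
    by (intro continuous_at_imp_continuous_on ballI DERIV_isCont) auto
  moreover have "(SUP s\<in>{0..t}. (logistic x0 s)\<^sup>2) = (logistic x0 t)\<^sup>2" if "t \<in> {0..T}" for t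
    using that assms by (intro cSup_eq_maximum) (auto intro!: logistic_square_mono)
  ultimately show ?thesis
    unfolding max_feedback_solution_def
    by (auto intro!: continuous_on_diff continuous_on_power has_field_derivative_at_within deriv)
qed

definition affine_exp :: "real \<Rightarrow> real \<Rightarrow> real" where
  "affine_exp x0 t = x0\<^sup>2 - (x0\<^sup>2 - x0) * exp t"

lemma affine_exp_0 [simp]: "affine_exp x0 0 = x0"
  by (simp add: affine_exp_def power2_eq_square)

lemma has_real_derivative_affine_exp:
  "(affine_exp x0 has_real_derivative affine_exp x0 t - x0\<^sup>2) (at t)"
  unfolding affine_exp_def [abs_def] by (auto intro!: derivative_eq_intros)

lemma abs_affine_exp_le:
  fixes x0 t :: real
  assumes "1 \<le> x0" and "0 \<le> t" and "t < 1 / (1 + x0)"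
  shows "\<bar>affine_exp x0 t\<bar> \<le> x0"
proof -
  have "0 \<le> x0\<^sup>2 - x0"
    using assms(1) by (simp add: power2_eq_square)
  then have "(x0\<^sup>2 - x0) * 1 \<le> (x0\<^sup>2 - x0) * exp t"
    using assms(2) by (intro mult_left_mono) auto
  moreover have "(x0 - 1) * (x0 * exp t) \<le> (x0 - 1) * (1 + x0)"
    using assms mult_exp_less_one_plus[of x0 t] by (intro mult_left_mono) auto
  ultimately show ?thesis
    by (auto simp: affine_exp_def abs_le_iff algebra_simps power2_eq_square)
qed

lemma max_feedback_solution_affine_exp:
  fixes x0 T :: real
  assumes "1 \<le> x0" and "T < 1 / (1 + x0)"
  shows "max_feedback_solution T x0 (affine_exp x0) (\<lambda>t. affine_exp x0 t - x0\<^sup>2)"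
proof -
  have "(SUP s\<in>{0..t}. (affine_exp x0 s)\<^sup>2) = x0\<^sup>2" if "t \<in> {0..T}" for t
  proof (rule cSup_eq_maximum)
    show "x0\<^sup>2 \<in> (\<lambda>s. (affine_exp x0 s)\<^sup>2) ` {0..t}"
      using that by (intro image_eqI[of _ _ 0]) auto
    show "y \<le> x0\<^sup>2" if "y \<in> (\<lambda>s. (affine_exp x0 s)\<^sup>2) ` {0..t}" for y
      using that \<open>t \<in> {0..T}\<close> assms abs_affine_exp_le[OF assms(1)]
      by (auto simp: power2_le_iff_abs_le)
  qed
  moreover have "continuous_on {0..T} (\<lambda>t. affine_exp x0 t - x0\<^sup>2)"
    unfolding affine_exp_def by (intro continuous_intros)
  ultimately show ?thesis
    unfolding max_feedback_solution_def
    by (auto intro: has_field_derivative_at_within has_real_derivative_affine_exp)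
qed

theorem mainTheorem2:
  fixes x0 \<alpha> T :: real
  assumes "x0 \<noteq> 1" and "\<alpha> > 1"
    and "0 < T" and "T < (\<alpha> - 1) / (\<alpha> * (1 + \<alpha> * \<bar>x0\<bar>))"
  shows "\<exists>x x' :: real \<Rightarrow> real.
           (\<forall>t\<in>{0..T}. (x has_real_derivative x' t) (at t within {0..T}))
         \<and> continuous_on {0..T} x'
         \<and> (\<forall>t\<in>{0..T}. x' t = x t - (SUP s\<in>{0..t}. (x s)\<^sup>2))
         \<and> x 0 = x0"
proof -
  have "(\<alpha> - 1) / (\<alpha> * (1 + \<alpha> * \<bar>x0\<bar>)) \<le> 1 / (1 + \<bar>x0\<bar>)"
    using assms(2) by (intro existence_time_le_inverse_one_plus) auto
  with assms(4) have T: "T < 1 / (1 + \<bar>x0\<bar>)"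
    by linarith
  have "\<exists>x x'. max_feedback_solution T x0 x x'"
  proof (cases "x0 \<le> 1")
    case True
    with T show ?thesis
      by (blast intro: max_feedback_solution_logistic)
  next
    case False
    with T have "max_feedback_solution T x0 (affine_exp x0) (\<lambda>t. affine_exp x0 t - x0\<^sup>2)"
      by (intro max_feedback_solution_affine_exp) auto
    then show ?thesis
      by blast
  qed
  then show ?thesis
    unfolding max_feedback_solution_def .
qed

end
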